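(* Let $M$ be a non-compact finite-dimensional smooth manifold and $E\neq\{0\}$ a locally convex space. Then $C^\infty_{vS}(M,E)$, with the vector space structure given by pointwise operations, is not a topological vector space.
   Context: Conventions: finite-dimensional manifolds are smooth, Hausdorff and $\sigma$-compact. Locally convex spaces are real Hausdorff locally convex topological vector spaces; differentiability is in the sense of Bastiani (Keller $C^r$-theory): for $U\subseteq E$ open and $f\colon U\to F$, $d^{(k)}f(x;y_1,\dots,y_k)=D_{y_k}\cdots D_{y_1}f(x)$ is the iterated directional derivative, and $f$ is smooth if all these exist and are continuous on $U\times E^k$ (and $f$ is continuous); manifolds modeled on locally convex spaces and smooth maps between them are defined via charts with smooth transition maps. Let $M$ be a finite-dimensional manifold of dimension $m$ and $e_1,\dots,e_m$ the standard basis of $\mathbb{R}^m$. For a locally convex space $E$, a continuous seminorm $p$ on $E$, an open $W\subseteq\mathbb{R}^m$, a smooth $g\colon W\to E$, a compact $A\subseteq W$ and $r\in\mathbb{N}_0$ put $\|g\|(r,A,p)=\sup\{p(d^{(k)}g(a;\alpha)) : a\in A,\ \alpha\in\{e_1,\dots,e_m\}^k,\ 0\le k\le r\}$ (for $E=\mathbb{R}^n$ one takes $p=\|\cdot\|_\infty$ and writes $\|g\|(r,A)$). For a manifold $X$ modeled on $E$, $f\in C^\infty(M,X)$, a chart $(U,\phi)$ of $M$, a compact $A\subseteq U$, a chart $(V,\psi)$ of $X$ with $f(A)\subseteq V$, a continuous seminorm $p$ on $E$, $r\in\mathbb{N}_0$ and $\epsilon>0$, the elementary neighborhood is $\mathcal{N}^r(f;A,(U,\phi),(V,\psi),p,\epsilon)=\{h\in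 C^\infty(M,X): h(A)\subseteq V,\ \|\psi\circ h\circ\phi^{-1}-\psi\circ f\circ\phi^{-1}\|(r,\phi(A),p)<\epsilon\}$. A basic neighborhood of $f$ is an intersection $\bigcap_{i\in\Lambda}\mathcal{N}^{r_i}(f;A_i,(U_i,\phi_i),(V_i,\psi_i),p_i,\epsilon_i)$ of elementary neighborhoods of $f$ such that the family $\{A_i\}_{i\in\Lambda}$ is locally finite in $M$. The very strong topology on $C^\infty(M,X)$ is the topology with the basic neighborhoods (of all $f$) as a basis; $C^\infty_{vS}(M,X)$ denotes $C^\infty(M,X)$ with this topology. When source or target is a vector space, its identity chart is used and omitted from the notation. *)

theory Defs
  imports "HOL-Analysis.Analysis"
begin

definition is_seminorm :: "('e::real_vector \<Rightarrow> real) \<Rightarrow> bool" where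
  "is_seminorm p \<longleftrightarrow> (\<forall>x y. p (x + y) \<le> p x + p y) \<and> (\<forall>c x. p (c *\<^sub>R x) = \<bar>c\<bar> * p x)"

definition lc_top :: "('e::real_vector \<Rightarrow> real) set \<Rightarrow> 'e topology" where
  "lc_top P = topology_generated_by {{y. p (y - x) < r} | p x r. p \<in> P \<and> r > 0}"

text \<open>A (Hausdorff) locally convex space structure on the type 'e: a nonempty separating
  family of seminorms.\<close>
definition lc_family :: "('e::real_vector \<Rightarrow> real) set \<Rightarrow> bool" where
  "lc_family P \<longleftrightarrow> P \<noteq> {} \<and> (\<forall>p\<in>P. is_seminorm p) \<and> (\<forall>x. x \<noteq> 0 \<longrightarrow> (\<exists>p\<in>P. p x \<noteq> 0))"

definition cont_seminorm :: "('e::real_vector \<Rightarrow> real) set \<Rightarrow> ('e \<Rightarrow> real) \<Rightarrow> bool" where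
  "cont_seminorm P p \<longleftrightarrow> is_seminorm p \<and> continuous_map (lc_top P) euclideanreal p"

definition has_dirderiv ::
  "('e::real_vector \<Rightarrow> real) set \<Rightarrow> ('v::real_vector \<Rightarrow> 'e) \<Rightarrow> 'v \<Rightarrow> 'v \<Rightarrow> 'e \<Rightarrow> bool" where
  "has_dirderiv P g x y v \<longleftrightarrow>
     limitin (lc_top P) (\<lambda>t::real. (1 / t) *\<^sub>R (g (x + t *\<^sub>R y) - g x)) v (at 0)"

definition dirD :: "('e::real_vector \<Rightarrow> real) set \<Rightarrow> 'v::real_vector \<Rightarrow> ('v \<Rightarrow> 'e) \<Rightarrow> 'v \<Rightarrow> 'e" where
  "dirD P y g = (\<lambda>x. THE v. has_dirderiv P g x y v)"

fun dd :: "('e::real_vector \<Rightarrow> real) set \<Rightarrow> ('v::real_vector \<Rightarrow> 'e) \<Rightarrow> 'v list \<Rightarrow> 'v \<Rightarrow> 'e" where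
  "dd P g [] = g"
| "dd P g (y # ys) = dd P (dirD P y g) ys"

text \<open>Bastiani smoothness on an open set W of R^m: all iterated directional derivatives exist
  on W, and (x, y1, ..., yk) \<mapsto> d^(k) g(x; y1..yk) is continuous on W \<times> (R^m)^k
  (the k directions are the first k coordinates of a point of the product space nat \<Rightarrow> R^m).\<close>
definition bsmooth :: "('e::real_vector \<Rightarrow> real) set \<Rightarrow> (real^'m \<Rightarrow> 'e) \<Rightarrow> (real^'m) set \<Rightarrow> bool" where
  "bsmooth P g W \<longleftrightarrow>
     (\<forall>ys y. \<forall>x\<in>W. \<exists>v. has_dirderiv P (dd P g ys) x y v) \<and>
     (\<forall>k. continuous_map (subtopology (prod_topology euclidean euclidean) (W \<times> UNIV)) (lc_top P)
            (\<lambda>(x, ys::nat \<Rightarrow> real^'m). dd P g (map ys [0..<k]) x))"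

definition is_chart :: "'a::topological_space set \<times> ('a \<Rightarrow> real^'m) \<Rightarrow> bool" where
  "is_chart c \<longleftrightarrow> (case c of (U, \<phi>) \<Rightarrow>
     open U \<and> open (\<phi> ` U) \<and> homeomorphism U (\<phi> ` U) \<phi> (inv_into U \<phi>))"

definition chart_compat :: "'a set \<times> ('a \<Rightarrow> real^'m) \<Rightarrow> 'a set \<times> ('a \<Rightarrow> real^'m) \<Rightarrow> bool" where
  "chart_compat c d \<longleftrightarrow> (case c of (U, \<phi>) \<Rightarrow> case d of (V, \<psi>) \<Rightarrow>
     bsmooth {norm} (\<psi> \<circ> inv_into U \<phi>) (\<phi> ` (U \<inter> V)) \<and>
     bsmooth {norm} (\<phi> \<circ> inv_into V \<psi>) (\<psi> ` (U \<inter> V)))"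

definition smooth_atlas :: "('a::topological_space set \<times> ('a \<Rightarrow> real^'m)) set \<Rightarrow> bool" where
  "smooth_atlas At \<longleftrightarrow> (\<forall>c\<in>At. is_chart c) \<and> (\<Union>(fst ` At) = UNIV) \<and>
     (\<forall>c\<in>At. \<forall>d\<in>At. chart_compat c d)"

text \<open>All charts of the manifold (the maximal atlas determined by At).\<close>
definition charts_of :: "('a::topological_space set \<times> ('a \<Rightarrow> real^'m)) set \<Rightarrow> ('a set \<times> ('a \<Rightarrow> real^'m)) set" where
  "charts_of At = {c. is_chart c \<and> (\<forall>d\<in>At. chart_compat c d)}"

definition Cinf :: "('e::real_vector \<Rightarrow> real) set \<Rightarrow> ('a::topological_space set \<times> ('a \<Rightarrow> real^'m)) set
    \<Rightarrow> ('a \<Rightarrow> 'e) set" where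
  "Cinf P At = {f. \<forall>(U, \<phi>)\<in>At. bsmooth P (f \<circ> inv_into U \<phi>) (\<phi> ` U)}"

definition seminorm_sup :: "('e::real_vector \<Rightarrow> real) set \<Rightarrow> (real^'m \<Rightarrow> 'e) \<Rightarrow> nat \<Rightarrow> (real^'m) set
    \<Rightarrow> ('e \<Rightarrow> real) \<Rightarrow> real" where
  "seminorm_sup P g r A p =
     Sup {p (dd P g \<alpha> a) | a \<alpha>. a \<in> A \<and> set \<alpha> \<subseteq> Basis \<and> length \<alpha> \<le> r}"

type_synonym ('a, 'm, 'e) nbhd_datum = "'a set \<times> ('a set \<times> ('a \<Rightarrow> real^'m)) \<times> nat \<times> ('e \<Rightarrow> real) \<times> real"

definition valid_datum :: "('e::real_vector \<Rightarrow> real) set \<Rightarrow> ('a::topological_space set \<times> ('a \<Rightarrow> real^'m)) set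
    \<Rightarrow> ('a, 'm, 'e) nbhd_datum \<Rightarrow> bool" where
  "valid_datum P At d \<longleftrightarrow> (case d of (A, (U, \<phi>), r, p, \<epsilon>) \<Rightarrow>
     (U, \<phi>) \<in> charts_of At \<and> compact A \<and> A \<subseteq> U \<and> cont_seminorm P p \<and> \<epsilon> > 0)"

text \<open>Elementary neighbourhood N^r(f; A, (U,\<phi>), p, \<epsilon>) (target E uses its identity chart).\<close>
definition elem_nbhd :: "('e::real_vector \<Rightarrow> real) set \<Rightarrow> ('a::topological_space set \<times> ('a \<Rightarrow> real^'m)) set
    \<Rightarrow> ('a \<Rightarrow> 'e) \<Rightarrow> ('a, 'm, 'e) nbhd_datum \<Rightarrow> ('a \<Rightarrow> 'e) set" where
  "elem_nbhd P At f d = (case d of (A, (U, \<phi>), r, p, \<epsilon>) \<Rightarrow>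
     {h \<in> Cinf P At.
        seminorm_sup P (\<lambda>x. h (inv_into U \<phi> x) - f (inv_into U \<phi> x)) r (\<phi> ` A) p < \<epsilon>})"

text \<open>Basic neighbourhoods: intersections of elementary neighbourhoods of f over a family
  whose compact sets form a locally finite family (index set = set of data).\<close>
definition basic_nbhd :: "('e::real_vector \<Rightarrow> real) set \<Rightarrow> ('a::topological_space set \<times> ('a \<Rightarrow> real^'m)) set
    \<Rightarrow> ('a \<Rightarrow> 'e) \<Rightarrow> ('a \<Rightarrow> 'e) set \<Rightarrow> bool" where
  "basic_nbhd P At f N \<longleftrightarrow> f \<in> Cinf P At \<and>
     (\<exists>S. (\<forall>d\<in>S. valid_datum P At d) \<and>
          (\<forall>x. \<exists>V. open V \<and> x \<in> V \<and> finite {d \<in> S. fst d \<inter> V \<noteq> {}}) \<and>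
          N = Cinf P At \<inter> (\<Inter>d\<in>S. elem_nbhd P At f d))"

definition vS_top :: "('e::real_vector \<Rightarrow> real) set \<Rightarrow> ('a::topological_space set \<times> ('a \<Rightarrow> real^'m)) set
    \<Rightarrow> ('a \<Rightarrow> 'e) topology" where
  "vS_top P At = topology_generated_by {N. \<exists>f. basic_nbhd P At f N}"

definition is_tvs_pointwise :: "('a \<Rightarrow> 'e::real_vector) topology \<Rightarrow> bool" where
  "is_tvs_pointwise T \<longleftrightarrow>
     continuous_map (prod_topology T T) T (\<lambda>(f, g). (\<lambda>x. f x + g x)) \<and>
     continuous_map (prod_topology euclideanreal T) T (\<lambda>(c, f). (\<lambda>x. c *\<^sub>R f x))"

end

theory Submission
  imports Defs
begin

text \<open>On a non-compact manifold pick points \<open>x\<^sub>n\<close> escaping every compact set. Since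
  \<open>{x\<^sub>n}\<close> is locally finite, the requirements \<open>p (h x\<^sub>n) < 1/(n+1)\<close> for all \<open>n\<close>
  define a very strong neighbourhood of \<open>0\<close>, for any continuous seminorm \<open>p\<close>. A constant map
  \<open>t v\<close> lies in it only if \<open>p (t v) = 0\<close>; choosing \<open>p v > 0\<close>, the curve \<open>t \<mapsto> t v\<close> leaves the
  neighbourhood for every \<open>t \<noteq> 0\<close>, so scalar multiplication is not continuous.\<close>

lemma seminorm_zero: "is_seminorm p \<Longrightarrow> p 0 = 0"
  unfolding is_seminorm_def by (metis abs_zero mult_zero_left scaleR_zero_left)

lemma seminorm_minus: "is_seminorm p \<Longrightarrow> p (- x) = p x"
  unfolding is_seminorm_def by (metis abs_minus_cancel abs_one mult_1 scaleR_minus1_left)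

lemma seminorm_nonneg:
  assumes "is_seminorm p"
  shows "p x \<ge> 0"
proof -
  have "p (x + - x) \<le> p x + p (- x)" using assms unfolding is_seminorm_def by blast
  then show ?thesis using seminorm_zero[OF assms] seminorm_minus[OF assms] by simp
qed

lemma seminorm_abs_diff_le:
  assumes "is_seminorm p"
  shows "\<bar>p z - p y\<bar> \<le> p (z - y)"
proof -
  have "p ((z - y) + y) \<le> p (z - y) + p y" "p ((y - z) + z) \<le> p (y - z) + p z"
    using assms unfolding is_seminorm_def by blast+
  moreover have "p (y - z) = p (z - y)" using seminorm_minus[OF assms, of "z - y"] by simp
  ultimately show ?thesis by simp
qed

lemma openin_lc_top_ball: "p \<in> P \<Longrightarrow> r > 0 \<Longrightarrow> openin (lc_top P) {y. p (y - x) < r}"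
  unfolding lc_top_def by (rule topology_generated_by_Basis) blast

lemma topspace_lc_top:
  assumes "lc_family P"
  shows "topspace (lc_top P) = UNIV"
proof -
  obtain p where p: "p \<in> P" "is_seminorm p" using assms unfolding lc_family_def by auto
  have "{y. p (y - x) < 1} \<in> {{y. p (y - x) < r} | p x r. p \<in> P \<and> r > 0}" for x
    using p(1) by force
  then have "x \<in> \<Union>{{y. p (y - x) < r} | p x r. p \<in> P \<and> r > 0}" for x
    using seminorm_zero[OF p(2)] by (intro UnionI[of "{y. p (y - x) < 1}"]) simp_all
  then show ?thesis unfolding lc_top_def topology_generated_by_topspace by blast
qed

lemma cont_seminorm_of_lc_family:
  assumes l: "lc_family P" and p: "p \<in> P"
  shows "cont_seminorm P p"
proof -
  have s: "is_seminorm p" using l p by (simp add: lc_family_def)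
  have "openin (lc_top P) {x. p x \<in> U}" if U: "open U" for U
  proof (subst openin_subopen, intro ballI)
    fix y assume "y \<in> {x. p x \<in> U}"
    then obtain e where e: "e > 0" "ball (p y) e \<subseteq> U" using U open_contains_ball by blast
    have "{z. p (z - y) < e} \<subseteq> {x. p x \<in> U}"
    proof
      fix z assume "z \<in> {z. p (z - y) < e}"
      then have "p z \<in> ball (p y) e"
        using seminorm_abs_diff_le[OF s, of z y] by (simp add: dist_real_def abs_minus_commute)
      then show "z \<in> {x. p x \<in> U}" using e by blast
    qed
    moreover have "y \<in> {z. p (z - y) < e}" using e seminorm_zero[OF s] by simp
    ultimately show "\<exists>T. openin (lc_top P) T \<and> y \<in> T \<and> T \<subseteq> {x. p x \<in> U}"
      using openin_lc_top_ball[OF p e(1)] by blast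
  qed
  then show ?thesis
    unfolding cont_seminorm_def continuous_map_def using s topspace_lc_top[OF l] by simp
qed

text \<open>Limits in \<open>lc_top P\<close> are unique because \<open>P\<close> separates points; this is what pins down
  the (otherwise \<open>THE\<close>-defined) derivative of a constant.\<close>
lemma has_dirderiv_const_iff:
  assumes l: "lc_family P"
  shows "has_dirderiv P (\<lambda>_. c) x y v \<longleftrightarrow> v = 0"
proof
  assume h: "has_dirderiv P (\<lambda>_. c) x y v"
  show "v = 0"
  proof (rule ccontr)
    assume "v \<noteq> 0"
    then obtain p where p: "p \<in> P" "p v \<noteq> 0" "is_seminorm p" using l unfolding lc_family_def by blast
    then have pv: "p v > 0" using seminorm_nonneg[OF p(3), of v] by simp
    have "openin (lc_top P) {z. p (z - v) < p v}" "v \<in> {z. p (z - v) < p v}"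
      using openin_lc_top_ball[OF p(1) pv] pv seminorm_zero[OF p(3)] by simp_all
    moreover have "\<forall>U. openin (lc_top P) U \<and> v \<in> U \<longrightarrow> 0 \<in> U"
      using h unfolding has_dirderiv_def limitin_def by simp
    ultimately have "0 \<in> {z. p (z - v) < p v}" by blast
    then show False using seminorm_minus[OF p(3)] by simp
  qed
next
  assume "v = 0"
  then show "has_dirderiv P (\<lambda>_. c) x y v"
    unfolding has_dirderiv_def using topspace_lc_top[OF l] by simp
qed

lemma dd_const: "lc_family P \<Longrightarrow> dd P (\<lambda>_. c) ys = (\<lambda>_. if ys = [] then c else 0)"
proof (induction ys arbitrary: c)
  case Nil
  then show ?case by simp
next
  case (Cons y ys)
  have "(THE v. has_dirderiv P (\<lambda>_. c) x y v) = 0" for x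
    by (rule the_equality) (simp_all only: has_dirderiv_const_iff[OF Cons.prems])
  then have "dirD P y (\<lambda>_. c) = (\<lambda>_. 0)" unfolding dirD_def by simp
  then show ?case using Cons by simp
qed

lemma bsmooth_const:
  fixes W :: "(real^'m) set"
  assumes l: "lc_family P"
  shows "bsmooth P (\<lambda>_. c) W"
  unfolding bsmooth_def
proof (intro conjI allI ballI)
  fix ys y x
  have "has_dirderiv P (dd P (\<lambda>_. c) ys) x y 0"
    unfolding dd_const[OF l] by (simp only: has_dirderiv_const_iff[OF l])
  then show "\<exists>v. has_dirderiv P (dd P (\<lambda>_. c) ys) x y v" ..
next
  fix k
  have "(\<lambda>(x, ys::nat \<Rightarrow> real^'m). dd P (\<lambda>_. c) (map ys [0..<k]) x) = (\<lambda>_. if k = 0 then c else 0)"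
    by (simp add: fun_eq_iff dd_const[OF l])
  then show "continuous_map (subtopology (prod_topology euclidean euclidean) (W \<times> UNIV)) (lc_top P)
            (\<lambda>(x, ys::nat \<Rightarrow> real^'m). dd P (\<lambda>_. c) (map ys [0..<k]) x)"
    using topspace_lc_top[OF l] by simp
qed

lemma const_in_Cinf: "lc_family P \<Longrightarrow> (\<lambda>_. c) \<in> Cinf P At"
  unfolding Cinf_def using bsmooth_const by (auto simp: o_def)

lemma seminorm_sup_0_singleton: "seminorm_sup P g 0 {a} p = p (g a)"
proof -
  have "{p (dd P g \<alpha> a') | a' \<alpha>. a' \<in> {a} \<and> set \<alpha> \<subseteq> Basis \<and> length \<alpha> \<le> 0} = {p (g a)}"
    by auto
  then show ?thesis unfolding seminorm_sup_def by simp
qed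

lemma smooth_atlas_locally_compact:
  fixes At :: "('a::t2_space set \<times> ('a \<Rightarrow> real^'m)) set"
  assumes "smooth_atlas At"
  shows "\<exists>V C. open V \<and> (x::'a) \<in> V \<and> V \<subseteq> C \<and> compact C"
proof -
  obtain U \<phi> where c: "(U, \<phi>) \<in> At" "x \<in> U"
    using assms unfolding smooth_atlas_def by (metis UNIV_I UnionE imageE prod.collapse)
  then have ch: "open U" "open (\<phi> ` U)" "homeomorphism U (\<phi> ` U) \<phi> (inv_into U \<phi>)"
    using assms unfolding smooth_atlas_def is_chart_def by auto
  define \<psi> where "\<psi> = inv_into U \<phi>"
  have h: "homeomorphism (\<phi> ` U) U \<psi> \<phi>" using ch(3) homeomorphism_sym \<psi>_def by blast
  obtain e where e: "e > 0" "cball (\<phi> x) e \<subseteq> \<phi> ` U"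
    using ch(2) c(2) open_contains_cball by blast
  have "openin (top_of_set U) (\<psi> ` ball (\<phi> x) e)"
    by (rule homeomorphism_imp_open_map[OF h])
      (use e ch(2) ball_subset_cball in \<open>auto simp: openin_open_eq\<close>)
  then have "open (\<psi> ` ball (\<phi> x) e)" using ch(1) openin_open_trans by blast
  moreover have "continuous_on (\<phi> ` U) \<psi>" using h homeomorphism_def by blast
  then have "compact (\<psi> ` cball (\<phi> x) e)"
    by (rule compact_continuous_image[OF continuous_on_subset[OF _ e(2)] compact_cball])
  moreover have "x \<in> \<psi> ` ball (\<phi> x) e"
    using h c(2) e(1) unfolding homeomorphism_def by (metis centre_in_ball image_eqI)
  ultimately show ?thesis by (meson ball_subset_cball image_mono)
qed

lemma compact_in_open_in_compact:
  fixes At :: "('a::t2_space set \<times> ('a \<Rightarrow> real^'m)) set"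
  assumes "smooth_atlas At" "compact (K::'a set)"
  shows "\<exists>Q L. open Q \<and> K \<subseteq> Q \<and> Q \<subseteq> L \<and> compact L"
proof -
  obtain V C where VC: "\<And>x::'a. open (V x) \<and> x \<in> V x \<and> V x \<subseteq> C x \<and> compact (C x)"
    using smooth_atlas_locally_compact[OF assms(1)] by metis
  have "K \<subseteq> (\<Union>x\<in>K. V x)" using VC by blast
  then obtain F where F: "F \<subseteq> K" "finite F" "K \<subseteq> (\<Union>x\<in>F. V x)"
    using compactE_image[OF assms(2), of K V] VC by blast
  have "open (\<Union>x\<in>F. V x)" using VC by blast
  moreover have "compact (\<Union>x\<in>F. C x)" using F(2) VC by (simp add: compact_UN)
  moreover have "(\<Union>x\<in>F. V x) \<subseteq> (\<Union>x\<in>F. C x)" using VC by blast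
  ultimately show ?thesis using F(3) by blast
qed

text \<open>Exhaust \<open>M\<close> by the open sets \<open>Q\<^sub>n \<supseteq> K\<^sub>0 \<union> \<dots> \<union> K\<^sub>n\<close> with compact closures in \<open>L\<^sub>n\<close>, and
  pick \<open>x\<^sub>n \<notin> L\<^sub>0 \<union> \<dots> \<union> L\<^sub>n\<close>; then \<open>Q\<^sub>N\<close> contains only \<open>x\<^sub>n\<close> with \<open>n < N\<close>.\<close>
lemma exists_locally_finite_sequence:
  fixes At :: "('a::t2_space set \<times> ('a \<Rightarrow> real^'m)) set"
  assumes "smooth_atlas At"
    and "\<exists>K::nat \<Rightarrow> 'a set. (\<forall>n. compact (K n)) \<and> (\<Union>n. K n) = UNIV"
    and "\<not> compact (UNIV :: 'a set)"
  shows "\<exists>x::nat \<Rightarrow> 'a. \<forall>y. \<exists>V. open V \<and> y \<in> V \<and> finite {n. x n \<in> V}"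
proof -
  obtain K :: "nat \<Rightarrow> 'a set" where K: "\<And>n. compact (K n)" "(\<Union>n. K n) = UNIV"
    using assms(2) by blast
  define M where "M n = (\<Union>i\<le>n. K i)" for n
  have M: "compact (M n)" for n unfolding M_def using K(1) by (simp add: compact_UN)
  obtain Q L where QL: "\<And>n. open (Q n) \<and> M n \<subseteq> Q n \<and> Q n \<subseteq> L n \<and> compact (L n)"
    using compact_in_open_in_compact[OF assms(1) M] by metis
  have "compact (\<Union>i\<le>n. L i)" for n using QL by (simp add: compact_UN)
  then have "\<exists>z. z \<notin> (\<Union>i\<le>n. L i)" for n using assms(3) by (metis UNIV_eq_I)
  then obtain x where x: "\<And>n. x n \<notin> (\<Union>i\<le>n. L i)" by metis
  have "\<exists>V. open V \<and> y \<in> V \<and> finite {n. x n \<in> V}" for y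
  proof -
    obtain N where "y \<in> K N" using K(2) by blast
    then have "y \<in> Q N" using QL M_def by blast
    moreover have "{n. x n \<in> Q N} \<subseteq> {..<N}"
    proof
      fix n assume "n \<in> {n. x n \<in> Q N}"
      then have "x n \<in> L N" using QL by blast
      then show "n \<in> {..<N}" using x[of n] by (metis UN_I atMost_iff lessThan_iff not_le_imp_less)
    qed
    then have "finite {n. x n \<in> Q N}" using finite_subset by blast
    ultimately show ?thesis using QL by blast
  qed
  then show ?thesis by blast
qed

lemma smooth_atlas_chart_at:
  assumes "smooth_atlas At"
  shows "\<exists>c\<in>charts_of At. x \<in> fst c"
proof -
  obtain c where "c \<in> At" "x \<in> fst c" using assms unfolding smooth_atlas_def by blast
  moreover have "c \<in> charts_of At"
    using \<open>c \<in> At\<close> assms unfolding smooth_atlas_def charts_of_def by blast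
  ultimately show ?thesis by blast
qed

lemma constant_in_topspace_vS_top:
  assumes "lc_family P"
  shows "(\<lambda>_. c) \<in> topspace (vS_top P At)"
proof -
  have "basic_nbhd P At (\<lambda>_. c) (Cinf P At)"
    unfolding basic_nbhd_def using const_in_Cinf[OF assms] by (intro conjI exI[of _ "{}"]) auto
  then show ?thesis
    unfolding vS_top_def topology_generated_by_topspace using const_in_Cinf[OF assms] by blast
qed

lemma vS_top_open_separating_constants:
  fixes At :: "('a::t2_space set \<times> ('a \<Rightarrow> real^'m)) set"
    and P :: "('e::real_vector \<Rightarrow> real) set"
    and x :: "nat \<Rightarrow> 'a"
  assumes atlas: "smooth_atlas At"
    and x: "\<And>y. \<exists>V. open V \<and> y \<in> V \<and> finite {n. x n \<in> V}"
    and l: "lc_family P" and p: "cont_seminorm P p"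
  shows "\<exists>N. openin (vS_top P At) N \<and> (\<forall>w. (\<lambda>_. w) \<in> N \<longleftrightarrow> p w = 0)"
proof -
  obtain ch where chart: "\<And>n. ch n \<in> charts_of At" and ch: "\<And>n. x n \<in> fst (ch n)"
    using smooth_atlas_chart_at[OF atlas, of "x _"] by metis
  define d :: "nat \<Rightarrow> ('a, 'm, 'e) nbhd_datum"
    where "d n = ({x n}, ch n, 0, p, 1 / real (Suc n))" for n
  define N where "N = Cinf P At \<inter> (\<Inter>n. elem_nbhd P At (\<lambda>_. 0) (d n))"
  have valid: "valid_datum P At (d n)" for n
    using chart[of n] ch[of n] p by (cases "ch n") (auto simp: valid_datum_def d_def)
  have locfin: "\<exists>V. open V \<and> y \<in> V \<and> finite {e \<in> range d. fst e \<inter> V \<noteq> {}}" for y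
  proof -
    obtain V where V: "open V" "y \<in> V" "finite {n. x n \<in> V}" using x by blast
    have "{e \<in> range d. fst e \<inter> V \<noteq> {}} \<subseteq> d ` {n. x n \<in> V}" by (auto simp: d_def)
    then show ?thesis using V finite_surj by blast
  qed
  have "basic_nbhd P At (\<lambda>_. 0) N"
    unfolding basic_nbhd_def N_def using const_in_Cinf[OF l] valid locfin
    by (intro conjI exI[of _ "range d"]) auto
  then have "openin (vS_top P At) N"
    unfolding vS_top_def by (intro topology_generated_by_Basis) blast
  moreover have "(\<lambda>_. w) \<in> N \<longleftrightarrow> p w = 0" for w
  proof -
    have "(\<lambda>_. w) \<in> elem_nbhd P At (\<lambda>_. 0) (d n) \<longleftrightarrow> p w < 1 / real (Suc n)" for n
      using const_in_Cinf[OF l, of w At]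
      by (cases "ch n") (simp add: elem_nbhd_def d_def seminorm_sup_0_singleton)
    then have "(\<lambda>_. w) \<in> N \<longleftrightarrow> (\<forall>n. p w < inverse (real (Suc n)))"
      using const_in_Cinf[OF l, of w At] by (simp add: N_def inverse_eq_divide)
    also have "\<dots> \<longleftrightarrow> p w = 0"
    proof
      assume small: "\<forall>n. p w < inverse (real (Suc n))"
      have "p w \<ge> 0" using p seminorm_nonneg unfolding cont_seminorm_def by blast
      moreover have "\<not> p w > 0" using small reals_Archimedean by (metis not_less_iff_gr_or_eq)
      ultimately show "p w = 0" by simp
    qed simp
    finally show ?thesis .
  qed
  ultimately show ?thesis by blast
qed

lemma is_tvs_pointwise_scale_continuous:
  assumes "is_tvs_pointwise T" "f \<in> topspace T"
  shows "continuous_map euclideanreal T (\<lambda>t x. t *\<^sub>R f x)"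
proof -
  have "continuous_map euclideanreal (prod_topology euclideanreal T) (\<lambda>t. (t, f))"
    using assms(2) by (simp add: continuous_map_paired)
  then have "continuous_map euclideanreal T ((\<lambda>(c, f). (\<lambda>x. c *\<^sub>R f x)) \<circ> (\<lambda>t. (t, f)))"
    using assms(1) unfolding is_tvs_pointwise_def by (meson continuous_map_compose)
  then show ?thesis by (simp add: o_def)
qed

theorem corollary3p2:
  fixes At :: "('a::t2_space set \<times> ('a \<Rightarrow> real^'m)) set"
    and P :: "('e::real_vector \<Rightarrow> real) set"
  assumes "smooth_atlas At"
    and "\<exists>K::nat \<Rightarrow> 'a set. (\<forall>n. compact (K n)) \<and> (\<Union>n. K n) = UNIV"
    and "\<not> compact (UNIV :: 'a set)"
    and "lc_family P"
    and "\<exists>x::'e. x \<noteq> 0"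
  shows "\<not> is_tvs_pointwise (vS_top P At)"
proof
  assume tvs: "is_tvs_pointwise (vS_top P At)"
  obtain v :: 'e and p where p: "p \<in> P" "p v \<noteq> 0"
    using assms(4,5) unfolding lc_family_def by blast
  have s: "is_seminorm p" using assms(4) p(1) by (simp add: lc_family_def)
  obtain x :: "nat \<Rightarrow> 'a" where "\<And>y. \<exists>V. open V \<and> y \<in> V \<and> finite {n. x n \<in> V}"
    using exists_locally_finite_sequence[OF assms(1-3)] by blast
  then obtain N where N: "openin (vS_top P At) N" "\<And>w. (\<lambda>_. w) \<in> N \<longleftrightarrow> p w = 0"
    using vS_top_open_separating_constants[OF assms(1) _ assms(4) cont_seminorm_of_lc_family[OF assms(4) p(1)]]
    by blast
  have "continuous_map euclideanreal (vS_top P At) (\<lambda>t (_::'a). t *\<^sub>R v)"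
    using is_tvs_pointwise_scale_continuous[OF tvs constant_in_topspace_vS_top[OF assms(4)]] .
  from openin_continuous_map_preimage[OF this N(1)]
  have "open {t. p (t *\<^sub>R v) = 0}" using N(2) by simp
  moreover have "{t. p (t *\<^sub>R v) = 0} = {0}"
    using s p(2) unfolding is_seminorm_def by auto
  ultimately show False using not_open_singleton by metis
qed

end
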